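(* Let $\omega=(\omega_0,\dots,\omega_d)\in\mathbb{R}^{d+1}_{>0}$ with $\omega_0\le\omega_1\le\dots\le\omega_d$. Then for every $i\in\{1,\dots,d-1\}$, $$\mu_i(S(\omega))\leqslant\frac{\Big(\frac{1}{\omega_0}+\sum_{k=i+1}^d\frac{1}{\omega_k}\Big)\Big(\sum_{j=1}^i\frac{1}{\omega_j}\Big)+\sum_{1\le s<t\le i}\frac{1}{\omega_s\omega_t}}{\sum_{k=0}^d\frac{1}{\omega_k}}.$$
   Context: $S(\omega)=\operatorname{conv}(-\omega_0\mathbb{1}_d,\omega_1e_1,\dots,\omega_de_d)\subseteq\mathbb{R}^d$. For a convex body $K\subseteq\mathbb{R}^d$ and $i\in\{1,\dots,d\}$, $\mu_i(K)=\min\{\mu\ge0:(\mu K+\mathbb{Z}^d)\cap U\ne\emptyset$ for every $(d-i)$-dimensional affine subspace $U\subseteq\mathbb{R}^d\}$. *)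

theory Defs
  imports "HOL-Analysis.Analysis"
begin

definition int_lattice :: "(real ^ 'n) set" where
  "int_lattice = {x. \<forall>k. x $ k \<in> \<int>}"

text \<open>Coordinates of real^'n are numbered 1..d via a bijection idx :: 'n => nat onto {1..d};
  the axis e_k is the standard basis vector at the coordinate c with idx c = k.\<close>
definition simplexS :: "('n::finite \<Rightarrow> nat) \<Rightarrow> (nat \<Rightarrow> real) \<Rightarrow> (real ^ 'n) set" where
  "simplexS idx \<omega> = convex hull
     (insert (\<chi> c. - \<omega> 0) ((\<lambda>c. \<omega> (idx c) *\<^sub>R axis c 1) ` UNIV))"

definition covering_minimum :: "nat \<Rightarrow> (real ^ 'n::finite) set \<Rightarrow> real" where
  "covering_minimum i K = Inf {\<mu>. \<mu> \<ge> 0 \<and>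
     (\<forall>U. affine U \<and> aff_dim U = int (CARD('n) - i) \<longrightarrow>
        {\<mu> *\<^sub>R x + z | x z. x \<in> K \<and> z \<in> int_lattice} \<inter> U \<noteq> {})}"

end

theory Submission
  imports Defs
begin

(* An affine subspace of dimension d - i contains a point p supported on some set J of i coordinates.
   For mu > 0, a point q lies in mu S(omega) iff there is c >= 0 with q + c 1 >= 0 and
   c / omega_0 + sum_k (q_k + c) / omega_k <= mu.  Subtracting from p the lattice point with
   coordinates floor (p_j + c) on J leaves the cost F c = A c + sum_(j in J) w_j frac (p_j + c),
   where w_j = 1 / omega_j and A = 1 / omega_0 + sum_(k notin J) 1 / omega_k.  Averaging F over c = 0
   (weight A) and the jump points c = 1 - frac p_k (weight w_k) yields a c with
   F c <= (A B + e_2(w_J)) / (A + B), where B = sum_(j in J) w_j and e_2 = offdiag_sum / 2 is the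
   second elementary symmetric function.  The numerator is e_2 of all weights minus e_2 of the
   weights outside J; as the weights 1 / omega_k decrease, it is largest for J = {1..i}, which gives
   the right-hand side of the theorem. *)

section \<open>Off-diagonal sums\<close>

definition offdiag_sum :: "('a \<Rightarrow> real) \<Rightarrow> 'a set \<Rightarrow> real" where
  "offdiag_sum f X = (\<Sum>s\<in>X. \<Sum>t\<in>X - {s}. f s * f t)"

lemma offdiag_sum_eq:
  assumes "finite X"
  shows "offdiag_sum f X = (sum f X)\<^sup>2 - (\<Sum>s\<in>X. (f s)\<^sup>2)"
proof -
  have "(\<Sum>t\<in>X - {s}. f s * f t) = f s * sum f X - (f s)\<^sup>2" if "s \<in> X" for s
    using assms that by (simp add: sum_distrib_left sum_diff1 power2_eq_square)
  then have "offdiag_sum f X = (\<Sum>s\<in>X. f s * sum f X - (f s)\<^sup>2)"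
    unfolding offdiag_sum_def by (rule sum.cong [OF refl])
  then show ?thesis
    by (simp add: sum_subtractf sum_distrib_right [symmetric] power2_eq_square)
qed

lemma offdiag_sum_nonneg:
  "(\<And>x. x \<in> X \<Longrightarrow> 0 \<le> f x) \<Longrightarrow> 0 \<le> offdiag_sum f X"
  unfolding offdiag_sum_def by (intro sum_nonneg mult_nonneg_nonneg) auto

lemma offdiag_sum_Un:
  assumes "finite A" "finite B" "A \<inter> B = {}"
  shows "offdiag_sum f (A \<union> B) = offdiag_sum f A + offdiag_sum f B + 2 * sum f A * sum f B"
  using assms by (simp add: offdiag_sum_eq sum.union_disjoint power2_eq_square algebra_simps)

lemma offdiag_sum_reindex:
  assumes "inj_on h X"
  shows "offdiag_sum f (h ` X) = offdiag_sum (f \<circ> h) X"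
proof -
  have "h ` X - {h s} = h ` (X - {s})" if "s \<in> X" for s
    using assms that by (auto simp: inj_on_def)
  moreover have "inj_on h (X - {s})" for s
    using assms by (rule inj_on_subset) auto
  ultimately show ?thesis
    using assms by (simp add: offdiag_sum_def sum.reindex)
qed

lemma offdiag_sum_image_le:
  assumes "inj_on h X" and "\<And>k. k \<in> X \<Longrightarrow> 0 \<le> f (h k) \<and> f (h k) \<le> f k"
  shows "offdiag_sum f (h ` X) \<le> offdiag_sum f X"
proof -
  have "offdiag_sum (f \<circ> h) X \<le> offdiag_sum f X"
    unfolding offdiag_sum_def comp_def
    by (intro sum_mono mult_mono) (use assms(2) order_trans in blast)+
  then show ?thesis by (simp add: offdiag_sum_reindex [OF assms(1)])
qed

lemma offdiag_sum_atLeastAtMost: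
  fixes m n :: nat
  shows "offdiag_sum u {m..n} = 2 * (\<Sum>s\<in>{m..n}. \<Sum>t\<in>{s+1..n}. u s * u t)"
proof (induction n)
  case 0
  then show ?case by (cases m) (simp_all add: offdiag_sum_def)
next
  case (Suc n)
  show ?case
  proof (cases "m \<le> Suc n")
    case True
    then have split: "{m..Suc n} = {m..n} \<union> {Suc n}" by auto
    have "(\<Sum>s\<in>{m..n}. \<Sum>t\<in>{s+1..Suc n}. u s * u t)
        = (\<Sum>s\<in>{m..n}. (\<Sum>t\<in>{s+1..n}. u s * u t) + u s * u (Suc n))"
      by (intro sum.cong) auto
    moreover have "offdiag_sum u ({m..n} \<union> {Suc n}) = offdiag_sum u {m..n} + 2 * sum u {m..n} * u (Suc n)"
      by (subst offdiag_sum_Un) (auto simp: offdiag_sum_def)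
    ultimately show ?thesis
      unfolding split using Suc.IH by (simp add: sum.distrib sum_distrib_left sum_distrib_right mult_ac)
  qed (simp add: offdiag_sum_def)
qed

lemma inj_on_onto_top_segment:
  fixes C :: "nat set"
  assumes C: "C \<subseteq> {..n}"
  obtains \<sigma> where "inj_on \<sigma> C" "\<sigma> ` C = {Suc n - card C..n}" "\<And>k. k \<in> C \<Longrightarrow> k \<le> \<sigma> k"
proof -
  define above where "above k = {j \<in> C. k < j}" for k
  \<comment> \<open>\<sigma> sends the m-th largest element of C to n + 1 - m.\<close>
  define \<sigma> where "\<sigma> k = n - card (above k)" for k
  have fin: "finite C" using C finite_subset by blast
  have above_le: "card (above k) \<le> n - k" for k
  proof -
    have "above k \<subseteq> {k<..n}" using C by (auto simp: above_def)
    then show ?thesis by (metis card_greaterThanAtMost card_mono finite_greaterThanAtMost)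
  qed
  have above_less: "card (above k) < card C" if "k \<in> C" for k
    using that fin by (intro psubset_card_mono) (auto simp: above_def)
  have "strict_mono_on C \<sigma>"
  proof (rule strict_mono_onI)
    fix k k' assume "k \<in> C" "k' \<in> C" "k < k'"
    then have "insert k' (above k') \<subseteq> above k" "k' \<notin> above k'"
      by (auto simp: above_def)
    moreover have "finite (above k)" "finite (above k')"
      using fin by (simp_all add: above_def)
    ultimately have "Suc (card (above k')) \<le> card (above k)"
      by (metis card_insert_disjoint card_mono)
    with above_le [of k] show "\<sigma> k < \<sigma> k'" by (simp add: \<sigma>_def)
  qed
  then have inj: "inj_on \<sigma> C" by (rule strict_mono_on_imp_inj_on)
  have "Suc n - card C \<le> \<sigma> k" if "k \<in> C" for k
    using above_less [OF that] unfolding \<sigma>_def by arith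
  then have "\<sigma> ` C \<subseteq> {Suc n - card C..n}"
    by (auto simp: \<sigma>_def)
  moreover have "card C \<le> Suc n"
    using card_mono [OF _ C] by simp
  then have "card (\<sigma> ` C) = card {Suc n - card C..n}"
    by (simp add: card_image [OF inj])
  ultimately have "\<sigma> ` C = {Suc n - card C..n}"
    by (intro card_subset_eq) auto
  moreover have "k \<le> \<sigma> k" if "k \<in> C" for k
    using above_le [of k] that C by (auto simp: \<sigma>_def)
  ultimately show ?thesis using that inj by blast
qed

lemma offdiag_sum_top_le:
  fixes u :: "nat \<Rightarrow> real"
  assumes antitone: "\<And>j k. j \<le> k \<Longrightarrow> k \<le> d \<Longrightarrow> u k \<le> u j"
    and nonneg: "\<And>k. k \<le> d \<Longrightarrow> 0 \<le> u k"
    and I: "I \<subseteq> {1..d}" "card I = i"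
  shows "offdiag_sum u (insert 0 {i+1..d}) \<le> offdiag_sum u ({0..d} - I)"
proof -
  define C where "C = {1..d} - I"
  have "card C = d - i"
    using I by (simp add: C_def card_Diff_subset finite_subset)
  moreover obtain \<sigma> where \<sigma>: "inj_on \<sigma> C" "\<sigma> ` C = {Suc d - card C..d}" "\<And>k. k \<in> C \<Longrightarrow> k \<le> \<sigma> k"
    by (rule inj_on_onto_top_segment [of C d]) (auto simp: C_def)
  moreover have "i \<le> d"
    using I card_mono [of "{1..d}" I] by simp
  ultimately have \<sigma>C: "\<sigma> ` C = {i+1..d}" by simp
  define \<tau> where "\<tau> = \<sigma>(0 := 0)"
  have "0 \<notin> C" by (simp add: C_def)
  then have "\<tau> k = \<sigma> k" if "k \<in> C" for k
    using that by (auto simp: \<tau>_def)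
  then have \<tau>C: "\<tau> ` C = {i+1..d}" "inj_on \<tau> C"
    using \<sigma>(1) \<sigma>C by (simp_all cong: image_cong inj_on_cong)
  then have "inj_on \<tau> (insert 0 C)" "\<tau> ` insert 0 C = insert 0 {i+1..d}"
    using \<open>0 \<notin> C\<close> by (auto simp: \<tau>_def)
  moreover have "0 \<le> u (\<tau> k) \<and> u (\<tau> k) \<le> u k" if "k \<in> insert 0 C" for k
  proof (cases "k = 0")
    case False
    with that have "k \<in> C" "k \<le> \<sigma> k" "\<sigma> k \<le> d" using \<sigma>(3) \<sigma>C by auto
    with False show ?thesis using antitone nonneg by (simp add: \<tau>_def)
  qed (simp add: \<tau>_def nonneg)
  moreover have "insert 0 C = {0..d} - I"
    using I by (auto simp: C_def)
  ultimately show ?thesis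
    by (metis offdiag_sum_image_le)
qed

lemma offdiag_sum_Diff:
  assumes "finite V" "A \<subseteq> V"
  shows "offdiag_sum f V = offdiag_sum f (V - A) + offdiag_sum f A + 2 * sum f (V - A) * sum f A"
proof -
  have "V = (V - A) \<union> A" using assms(2) by blast
  then show ?thesis
    using assms by (metis Diff_disjoint Int_commute finite_Diff finite_subset offdiag_sum_Un)
qed

lemma complement_sum_offdiag_le:
  fixes u :: "nat \<Rightarrow> real"
  assumes antitone: "\<And>j k. j \<le> k \<Longrightarrow> k \<le> d \<Longrightarrow> u k \<le> u j"
    and nonneg: "\<And>k. k \<le> d \<Longrightarrow> 0 \<le> u k"
    and I: "I \<subseteq> {1..d}" "card I = i"
  shows "sum u ({0..d} - I) * sum u I + offdiag_sum u I / 2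
    \<le> (u 0 + sum u {i+1..d}) * sum u {1..i} + offdiag_sum u {1..i} / 2"
proof -
  have "i \<le> d"
    using I card_mono [of "{1..d}" I] by simp
  then have top: "{0..d} - {1..i} = insert 0 {i+1..d}"
    by auto
  have "sum u ({0..d} - I) * sum u I + offdiag_sum u I / 2
      = (offdiag_sum u {0..d} - offdiag_sum u ({0..d} - I)) / 2"
    using I by (simp add: offdiag_sum_Diff [of "{0..d}" I] subset_iff)
  also have "\<dots> \<le> (offdiag_sum u {0..d} - offdiag_sum u (insert 0 {i+1..d})) / 2"
    using offdiag_sum_top_le [OF antitone nonneg I] by simp
  also have "\<dots> = (u 0 + sum u {i+1..d}) * sum u {1..i} + offdiag_sum u {1..i} / 2"
    using offdiag_sum_Diff [of "{0..d}" "{1..i}" u] \<open>i \<le> d\<close> unfolding top by simp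
  finally show ?thesis .
qed

section \<open>Averaging over fractional shifts\<close>

lemma frac_add_one_minus_frac:
  fixes x y :: real
  shows "frac (x + (1 - frac y)) = frac x - frac y + (if frac x < frac y then 1 else 0)"
proof -
  have bounds: "0 \<le> frac x" "frac x < 1" "0 \<le> frac y" "frac y < 1"
    by (auto simp: frac_lt_1)
  have x: "x = of_int \<lfloor>x\<rfloor> + frac x"
    by (simp add: frac_def)
  show ?thesis
  proof (cases "frac x < frac y")
    case True
    have "\<lfloor>x + (1 - frac y)\<rfloor> = \<lfloor>x\<rfloor>"
      by (rule floor_unique) (use bounds True x in linarith)+
    with True show ?thesis by (simp add: frac_def)
  next
    case False
    have "\<lfloor>x + (1 - frac y)\<rfloor> = \<lfloor>x\<rfloor> + 1"
      by (rule floor_unique) (use bounds False x in linarith)+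
    with False show ?thesis by (simp add: frac_def)
  qed
qed

lemma ordered_pairs_le_offdiag_sum:
  fixes z w :: "'a \<Rightarrow> real"
  assumes "finite J" "\<And>j. j \<in> J \<Longrightarrow> 0 \<le> w j"
  shows "2 * (\<Sum>k\<in>J. \<Sum>j\<in>J. if z j < z k then w k * w j else 0) \<le> offdiag_sum w J"
proof -
  let ?X = "\<Sum>k\<in>J. \<Sum>j\<in>J. if z j < z k then w k * w j else 0"
  have "?X = (\<Sum>k\<in>J. \<Sum>j\<in>J. if z k < z j then w k * w j else 0)"
    by (subst sum.swap) (intro sum.cong refl, simp add: mult.commute)
  then have "2 * ?X = (\<Sum>k\<in>J. \<Sum>j\<in>J. (if z j < z k then w k * w j else 0) + (if z k < z j then w k * w j else 0))"
    by (simp add: sum.distrib)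
  also have "\<dots> = (\<Sum>k\<in>J. \<Sum>j\<in>J - {k}. (if z j < z k then w k * w j else 0) + (if z k < z j then w k * w j else 0))"
    using assms(1) by (intro sum.cong [OF refl]) (simp add: sum_diff1)
  also have "\<dots> \<le> offdiag_sum w J"
    unfolding offdiag_sum_def using assms(2) by (intro sum_mono) auto
  finally show ?thesis .
qed

lemma frac_shift_average_le:
  fixes A :: real and y w :: "'a \<Rightarrow> real"
  assumes J: "finite J" and w: "\<And>j. j \<in> J \<Longrightarrow> 0 \<le> w j"
  defines "F \<equiv> \<lambda>c. A * c + (\<Sum>j\<in>J. w j * frac (y j + c))"
  shows "A * F 0 + (\<Sum>k\<in>J. w k * F (1 - frac (y k))) \<le> A * sum w J + offdiag_sum w J / 2"
proof -
  define z where "z j = frac (y j)" for j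
  define X where "X = (\<Sum>k\<in>J. \<Sum>j\<in>J. if z j < z k then w k * w j else 0)"
  have shifted: "w k * F (1 - z k) = A * w k - A * (w k * z k)
      + (\<Sum>j\<in>J. w k * w j * (z j - z k)) + (\<Sum>j\<in>J. if z j < z k then w k * w j else 0)" for k
  proof -
    have "w k * F (1 - z k) = A * w k - A * (w k * z k) + w k * (\<Sum>j\<in>J. w j * frac (y j + (1 - z k)))"
      by (simp add: F_def right_diff_distrib distrib_left mult_ac)
    also have "w k * (\<Sum>j\<in>J. w j * frac (y j + (1 - z k)))
        = (\<Sum>j\<in>J. w k * w j * (z j - z k) + (if z j < z k then w k * w j else 0))"
      unfolding sum_distrib_left z_def frac_add_one_minus_frac
      by (intro sum.cong refl) (simp add: algebra_simps)
    finally show ?thesis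
      by (simp only: sum.distrib add.assoc)
  qed
  have antisymmetric: "(\<Sum>k\<in>J. \<Sum>j\<in>J. w k * w j * (z j - z k)) = 0"
  proof -
    have "(\<Sum>k\<in>J. \<Sum>j\<in>J. w k * w j * z j) = (\<Sum>k\<in>J. \<Sum>j\<in>J. w k * w j * z k)"
      by (subst sum.swap) (simp add: mult.commute)
    then show ?thesis
      by (simp add: right_diff_distrib sum_subtractf)
  qed
  have "(\<Sum>k\<in>J. w k * F (1 - z k)) = A * sum w J - A * (\<Sum>k\<in>J. w k * z k) + X"
    using antisymmetric
    by (simp add: shifted sum.distrib sum_subtractf sum_distrib_left X_def)
  moreover have "F 0 = (\<Sum>k\<in>J. w k * z k)"
    by (simp add: F_def z_def)
  moreover have "2 * X \<le> offdiag_sum w J"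
    unfolding X_def by (rule ordered_pairs_le_offdiag_sum [OF J w])
  ultimately show ?thesis
    by (simp add: z_def)
qed

lemma exists_frac_shift_le:
  fixes y w :: "'a \<Rightarrow> real"
  assumes J: "finite J" and A: "0 < A" and w: "\<And>j. j \<in> J \<Longrightarrow> 0 \<le> w j"
  shows "\<exists>c\<ge>0. A * c + (\<Sum>j\<in>J. w j * frac (y j + c))
    \<le> (A * sum w J + offdiag_sum w J / 2) / (A + sum w J)"
proof (rule ccontr)
  define F where "F c = A * c + (\<Sum>j\<in>J. w j * frac (y j + c))" for c
  define M where "M = (A * sum w J + offdiag_sum w J / 2) / (A + sum w J)"
  assume none: "\<not> ?thesis"
  have above: "M < F c" if "0 \<le> c" for c
    using none that unfolding F_def M_def by (meson not_le)
  have "0 < A + sum w J"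
    using A w by (simp add: add_pos_nonneg sum_nonneg)
  have "A * M + (\<Sum>k\<in>J. w k * M) < A * F 0 + (\<Sum>k\<in>J. w k * F (1 - frac (y k)))"
  proof (rule add_less_le_mono)
    show "A * M < A * F 0" using A above [of 0] by simp
    show "(\<Sum>k\<in>J. w k * M) \<le> (\<Sum>k\<in>J. w k * F (1 - frac (y k)))"
      using w above by (intro sum_mono mult_left_mono) (auto simp: less_imp_le frac_lt_1)
  qed
  also have "\<dots> \<le> A * sum w J + offdiag_sum w J / 2"
    using frac_shift_average_le [OF J w, where A = A and y = y] by (simp add: F_def)
  also have "\<dots> = (A + sum w J) * M"
    using \<open>0 < A + sum w J\<close> by (simp add: M_def)
  finally show False
    by (simp add: sum_distrib_right distrib_right)
qed

lemma exists_lattice_shift_le: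
  fixes p :: "real^'n" and w :: "'n \<Rightarrow> real"
  assumes a0: "0 < a0" and w: "\<And>k. 0 \<le> w k" and p: "\<And>k. k \<notin> J \<Longrightarrow> p$k = 0"
  obtains c z where "0 \<le> c" "z \<in> int_lattice" "\<And>k. 0 \<le> (p - z)$k + c"
    "a0 * c + (\<Sum>k\<in>UNIV. w k * ((p - z)$k + c))
      \<le> ((a0 + sum w (- J)) * sum w J + offdiag_sum w J / 2) / (a0 + sum w (- J) + sum w J)"
proof -
  define A where "A = a0 + sum w (- J)"
  have "0 < A"
    using a0 w by (simp add: A_def add_pos_nonneg sum_nonneg)
  then obtain c where c: "0 \<le> c"
    and bound: "A * c + (\<Sum>j\<in>J. w j * frac (p$j + c)) \<le> (A * sum w J + offdiag_sum w J / 2) / (A + sum w J)"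
    using exists_frac_shift_le [of J A w "\<lambda>k. p$k"] w by auto
  define z :: "real^'n" where "z = (\<chi> k. if k \<in> J then of_int \<lfloor>p$k + c\<rfloor> else 0)"
  have z: "z \<in> int_lattice"
    by (auto simp: int_lattice_def z_def)
  have shifted: "p$k - z$k + c = (if k \<in> J then frac (p$k + c) else c)" for k
    using p by (auto simp: z_def frac_def)
  have "(\<Sum>k\<in>UNIV. w k * ((p - z)$k + c)) = (\<Sum>k\<in>J. w k * ((p - z)$k + c)) + (\<Sum>k\<in>- J. w k * ((p - z)$k + c))"
    using sum.subset_diff [of J UNIV] by (simp add: Compl_eq_Diff_UNIV add.commute)
  also have "\<dots> = (\<Sum>k\<in>J. w k * frac (p$k + c)) + (\<Sum>k\<in>- J. w k * c)"
    by (intro arg_cong2 [where f = "(+)"] sum.cong) (simp_all add: shifted)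
  finally have "a0 * c + (\<Sum>k\<in>UNIV. w k * ((p - z)$k + c)) = a0 * c + (\<Sum>k\<in>J. w k * frac (p$k + c)) + (\<Sum>k\<in>- J. w k * c)"
    by simp
  also have "\<dots> = A * c + (\<Sum>j\<in>J. w j * frac (p$j + c))"
    by (simp add: A_def sum_distrib_left algebra_simps)
  finally show ?thesis
    using that [OF c z] bound c by (simp add: shifted A_def frac_ge_0)
qed

section \<open>Lattice translates of the simplex\<close>

lemma sum_UNIV_option:
  fixes g :: "'a::finite option \<Rightarrow> 'b::comm_monoid_add"
  shows "(\<Sum>x\<in>UNIV. g x) = g None + (\<Sum>k\<in>UNIV. g (Some k))"
  by (simp add: UNIV_option_conv sum.reindex)

lemma scaleR_mem_simplexS:
  fixes q :: "real^'n::finite" and idx :: "'n \<Rightarrow> nat" and \<omega> :: "nat \<Rightarrow> real"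
  assumes \<omega>0: "0 < \<omega> 0" and \<omega>: "\<And>k. 0 < \<omega> (idx k)" and \<mu>: "0 < \<mu>"
    and c: "0 \<le> c" and qc: "\<And>k. 0 \<le> q$k + c"
    and eq: "c / \<omega> 0 + (\<Sum>k\<in>UNIV. (q$k + c) / \<omega> (idx k)) = \<mu>"
  shows "(1 / \<mu>) *\<^sub>R q \<in> simplexS idx \<omega>"
proof -
  define vertex :: "'n option \<Rightarrow> real^'n" where
    "vertex x = (case x of None \<Rightarrow> (\<chi> _. - \<omega> 0) | Some k \<Rightarrow> \<omega> (idx k) *\<^sub>R axis k 1)" for x
  define weight :: "'n option \<Rightarrow> real" where
    "weight x = (case x of None \<Rightarrow> c / \<omega> 0 / \<mu> | Some k \<Rightarrow> (q$k + c) / \<omega> (idx k) / \<mu>)" for x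
  have "(\<Sum>x\<in>UNIV. weight x *\<^sub>R vertex x) \<in> simplexS idx \<omega>"
    unfolding simplexS_def
  proof (rule convex_sum)
    have "(\<Sum>x\<in>UNIV. weight x) = (c / \<omega> 0 + (\<Sum>k\<in>UNIV. (q$k + c) / \<omega> (idx k))) / \<mu>"
      by (simp add: sum_UNIV_option weight_def sum_divide_distrib add_divide_distrib)
    then show "(\<Sum>x\<in>UNIV. weight x) = 1"
      using eq \<mu> by simp
    show "0 \<le> weight x" for x
      using c qc \<mu> \<omega>0 \<omega> by (auto simp: weight_def split: option.split intro!: divide_nonneg_pos mult_pos_pos)
    show "vertex x \<in> convex hull (insert (\<chi> _. - \<omega> 0) ((\<lambda>c. \<omega> (idx c) *\<^sub>R axis c 1) ` UNIV))" for x
      by (rule hull_inc) (auto simp: vertex_def split: option.split)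
  qed simp_all
  moreover have "(\<Sum>x\<in>UNIV. weight x *\<^sub>R vertex x) = (1 / \<mu>) *\<^sub>R q"
  proof (subst vec_eq_iff, intro allI)
    fix k
    have "vertex (Some j) $ k = (if j = k then \<omega> (idx k) else 0)" for j
      by (simp add: vertex_def axis_def)
    then have "(\<Sum>j\<in>UNIV. weight (Some j) * (vertex (Some j) $ k)) = (q$k + c) / \<mu>"
      using \<omega> [of k] by (simp add: weight_def if_distrib [of "\<lambda>t. _ * t"] cong: if_cong)
    moreover have "(\<Sum>x\<in>UNIV. weight x *\<^sub>R vertex x) $ k
        = weight None * (vertex None $ k) + (\<Sum>j\<in>UNIV. weight (Some j) * (vertex (Some j) $ k))"
      by (simp add: sum_UNIV_option)
    ultimately show "(\<Sum>x\<in>UNIV. weight x *\<^sub>R vertex x) $ k = ((1 / \<mu>) *\<^sub>R q) $ k"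
      using \<omega>0 by (simp add: weight_def vertex_def diff_divide_distrib [symmetric])
  qed
  ultimately show ?thesis by simp
qed

lemma scaleR_mem_simplexS_le:
  fixes q :: "real^'n::finite" and idx :: "'n \<Rightarrow> nat" and \<omega> :: "nat \<Rightarrow> real"
  assumes \<omega>0: "0 < \<omega> 0" and \<omega>: "\<And>k. 0 < \<omega> (idx k)" and \<mu>: "0 < \<mu>"
    and c: "0 \<le> c" and qc: "\<And>k. 0 \<le> q$k + c"
    and le: "1 / \<omega> 0 * c + (\<Sum>k\<in>UNIV. 1 / \<omega> (idx k) * (q$k + c)) \<le> \<mu>"
  shows "(1 / \<mu>) *\<^sub>R q \<in> simplexS idx \<omega>"
proof -
  define T where "T = 1 / \<omega> 0 + (\<Sum>k\<in>UNIV. 1 / \<omega> (idx k))"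
  define G where "G = 1 / \<omega> 0 * c + (\<Sum>k\<in>UNIV. 1 / \<omega> (idx k) * (q$k + c))"
  have "0 < T"
    using \<omega>0 \<omega> by (simp add: T_def add_pos_nonneg sum_nonneg less_imp_le)
  define c' where "c' = c + (\<mu> - G) / T"
  have "c \<le> c'"
    using le \<open>0 < T\<close> by (simp add: c'_def G_def)
  have "(\<Sum>k\<in>UNIV. 1 / \<omega> (idx k) * (q$k + c'))
      = (\<Sum>k\<in>UNIV. 1 / \<omega> (idx k) * (q$k + c)) + (\<Sum>k\<in>UNIV. 1 / \<omega> (idx k)) * (c' - c)"
    unfolding sum_distrib_right sum.distrib [symmetric] by (rule sum.cong) (simp_all add: add_divide_distrib diff_divide_distrib)
  then have "1 / \<omega> 0 * c' + (\<Sum>k\<in>UNIV. 1 / \<omega> (idx k) * (q$k + c')) = G + T * (c' - c)"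
    by (simp add: G_def T_def diff_divide_distrib algebra_simps)
  also have "\<dots> = \<mu>"
    using \<open>0 < T\<close> by (simp add: c'_def)
  finally have "c' / \<omega> 0 + (\<Sum>k\<in>UNIV. (q$k + c') / \<omega> (idx k)) = \<mu>"
    by simp
  moreover have "0 \<le> q$k + c'" for k
    using qc [of k] \<open>c \<le> c'\<close> by linarith
  ultimately show ?thesis
    using c \<open>c \<le> c'\<close> \<omega>0 \<omega> \<mu> by (intro scaleR_mem_simplexS [where c = c']) auto
qed

lemma Basis_vec_real: "(Basis :: (real^'n) set) = range (\<lambda>k. axis k 1)"
  by (auto simp: Basis_vec_def)

lemma subspace_coordinate_complement:
  fixes V :: "(real^'n) set"
  assumes V: "subspace V"
  obtains J where "card J = CARD('n) - dim V"
    "\<And>a. \<exists>v e. a = v + e \<and> v \<in> V \<and> (\<forall>k. k \<notin> J \<longrightarrow> e$k = 0)"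
proof -
  obtain Bv where Bv: "Bv \<subseteq> V" "independent Bv" "V \<subseteq> span Bv" "card Bv = dim V"
    by (rule basis_exists)
  obtain B where B: "Bv \<subseteq> B" "B \<subseteq> Bv \<union> Basis" "independent B" "Bv \<union> Basis \<subseteq> span B"
    using maximal_independent_subset_extend [of Bv "Bv \<union> Basis"] Bv(2) by blast
  have "span B = UNIV"
    using B(4) span_Basis by (metis le_sup_iff span_mono span_span top.extremum_uniqueI)
  then have "card B = CARD('n)"
    using basis_card_eq_dim [of B UNIV] B(3) by simp
  define E where "E = B - Bv"
  define J where "J = {k. axis k 1 \<in> E}"
  have E: "E = (\<lambda>k. axis k 1) ` J"
    using B(2) by (auto simp: E_def J_def Basis_vec_real)
  have "card J = card E"
    unfolding E by (rule card_image [symmetric]) (simp add: inj_on_def axis_eq_axis)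
  also have "card E = CARD('n) - dim V"
    using B(1,3) \<open>card B = CARD('n)\<close> Bv(4)
    by (simp add: E_def card_Diff_subset finite_subset independent_bound)
  finally have "card J = CARD('n) - dim V" .
  moreover have "\<exists>v e. a = v + e \<and> v \<in> V \<and> (\<forall>k. k \<notin> J \<longrightarrow> e$k = 0)" for a
  proof -
    have "a \<in> span (Bv \<union> E)"
      using \<open>span B = UNIV\<close> B(1) by (simp add: E_def Un_absorb1)
    then obtain v e where "a = v + e" "v \<in> span Bv" "e \<in> span E"
      unfolding span_Un by blast
    moreover have "span Bv = V"
      by (rule span_subspace [OF Bv(1,3) V])
    moreover have "span E \<subseteq> {x. \<forall>k. k \<notin> J \<longrightarrow> x$k = 0}"
      by (rule span_minimal) (auto simp: E subspace_def axis_def)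
    ultimately show ?thesis
      by blast
  qed
  ultimately show ?thesis
    using that by blast
qed

lemma affine_meets_coordinate_subspace:
  fixes U :: "(real^'n) set"
  assumes U: "affine U" "aff_dim U = int (CARD('n) - i)" and i: "i \<le> CARD('n)"
  obtains J p where "card J = i" "p \<in> U" "\<And>k. k \<notin> J \<Longrightarrow> p$k = 0"
proof -
  obtain a where a: "a \<in> U"
    using U(2) by fastforce
  define V where "V = (\<lambda>x. - a + x) ` U"
  have V: "subspace V"
    unfolding V_def by (rule affine_diffs_subspace [OF U(1) a])
  have "dim V = CARD('n) - i"
    using U(2) aff_dim_eq_dim [of a U] a by (simp add: V_def hull_inc)
  obtain J where J: "card J = CARD('n) - dim V"
    and split: "\<And>a. \<exists>v e. a = v + e \<and> v \<in> V \<and> (\<forall>k. k \<notin> J \<longrightarrow> e$k = 0)"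
    by (rule subspace_coordinate_complement [OF V]) blast
  obtain v e where ve: "a = v + e" "v \<in> V" "\<And>k. k \<notin> J \<Longrightarrow> e$k = 0"
    using split [of a] by blast
  have "- v \<in> V"
    using ve(2) V by (simp add: subspace_neg)
  then have "e \<in> U"
    using ve(1) by (auto simp: V_def)
  moreover have "card J = i"
    using J \<open>dim V = CARD('n) - i\<close> i by simp
  ultimately show ?thesis
    using that ve(3) by blast
qed

lemma covering_minimum_le:
  fixes K :: "(real^'n) set"
  assumes "0 \<le> \<mu>"
    and "\<And>U. affine U \<Longrightarrow> aff_dim U = int (CARD('n) - i) \<Longrightarrow> \<exists>x\<in>K. \<exists>z\<in>int_lattice. \<mu> *\<^sub>R x + z \<in> U"
  shows "covering_minimum i K \<le> \<mu>"
  unfolding covering_minimum_def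
proof (rule cInf_lower)
  show "bdd_below {\<mu>. 0 \<le> \<mu> \<and> (\<forall>U. affine U \<and> aff_dim U = int (CARD('n) - i) \<longrightarrow>
      {\<mu> *\<^sub>R x + z |x z. x \<in> K \<and> z \<in> int_lattice} \<inter> U \<noteq> {})}"
    by (rule bdd_belowI [of _ 0]) auto
qed (use assms in fastforce)

lemma sum_insert_zero_image_Compl:
  fixes u :: "nat \<Rightarrow> 'a::comm_monoid_add" and idx :: "'n::finite \<Rightarrow> nat"
  assumes idx: "bij_betw idx UNIV {1..n}"
  shows "u 0 + sum (u \<circ> idx) (- J) = sum u ({0..n} - idx ` J)"
proof -
  have "idx ` J \<union> idx ` (- J) = {1..n}" "idx ` J \<inter> idx ` (- J) = {}"
    using idx by (auto simp: bij_betw_def inj_on_def simp flip: image_Un)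
  moreover have "{0..n} = insert 0 {1..n}"
    by auto
  moreover have nonzero: "idx k \<noteq> 0" for k
    using idx unfolding bij_betw_def by force
  ultimately have "{0..n} - idx ` J = insert 0 (idx ` (- J))" "0 \<notin> idx ` (- J)"
    by (auto simp: nonzero)
  moreover have "inj_on idx (- J)"
    using idx by (auto simp: bij_betw_def inj_on_def)
  ultimately show ?thesis
    by (simp add: sum.reindex)
qed

lemma supported_point_in_lattice_translate:
  fixes \<omega> :: "nat \<Rightarrow> real" and idx :: "'n::finite \<Rightarrow> nat" and p :: "real^'n"
  assumes idx: "bij_betw idx UNIV {1..CARD('n)}"
    and pos: "\<And>k. k \<le> CARD('n) \<Longrightarrow> 0 < \<omega> k"
    and mono: "\<And>j k. j \<le> k \<Longrightarrow> k \<le> CARD('n) \<Longrightarrow> \<omega> j \<le> \<omega> k"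
    and J: "card J = i" and p: "\<And>k. k \<notin> J \<Longrightarrow> p$k = 0"
  defines "u \<equiv> \<lambda>k. 1 / \<omega> k"
  defines "\<mu> \<equiv> ((u 0 + sum u {i+1..CARD('n)}) * sum u {1..i} + offdiag_sum u {1..i} / 2) / sum u {0..CARD('n)}"
  assumes \<mu>: "0 < \<mu>"
  shows "\<exists>x\<in>simplexS idx \<omega>. \<exists>z\<in>int_lattice. \<mu> *\<^sub>R x + z = p"
proof -
  define d where "d = CARD('n)"
  define I where "I = idx ` J"
  have inj: "inj_on idx A" for A
    using idx by (auto simp: bij_betw_def inj_on_def)
  have I: "I \<subseteq> {1..d}" "card I = i"
    using idx J card_image [OF inj] by (auto simp: I_def d_def bij_betw_def)
  have u: "0 < u k" if "k \<le> d" for k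
    using pos that by (simp add: u_def d_def)
  have antitone: "u k \<le> u j" if "j \<le> k" "k \<le> d" for j k
    using mono pos that by (simp add: u_def d_def frac_le)
  have T: "0 < sum u {0..d}"
    using u by (intro sum_pos) auto
  have idx_range: "idx k \<in> {1..d}" for k
    using idx unfolding bij_betw_def d_def by blast
  then have \<omega>idx: "0 < \<omega> (idx k)" for k
    using pos by (simp add: d_def)
  obtain c z where c: "0 \<le> c" "z \<in> int_lattice" "\<And>k. 0 \<le> (p - z)$k + c"
    and bound: "u 0 * c + (\<Sum>k\<in>UNIV. (u \<circ> idx) k * ((p - z)$k + c))
      \<le> ((u 0 + sum (u \<circ> idx) (- J)) * sum (u \<circ> idx) J + offdiag_sum (u \<circ> idx) J / 2)
        / (u 0 + sum (u \<circ> idx) (- J) + sum (u \<circ> idx) J)"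
    using exists_lattice_shift_le [of "u 0" "u \<circ> idx" J p] u \<omega>idx p by (auto simp: u_def less_imp_le)
  have "u 0 + sum (u \<circ> idx) (- J) = sum u ({0..d} - I)"
    unfolding I_def d_def by (rule sum_insert_zero_image_Compl [OF idx])
  moreover have "sum (u \<circ> idx) J = sum u I" "offdiag_sum (u \<circ> idx) J = offdiag_sum u I"
    by (simp_all add: I_def sum.reindex [OF inj] offdiag_sum_reindex [OF inj])
  moreover have "sum u ({0..d} - I) + sum u I = sum u {0..d}"
    using I(1) by (simp add: sum.subset_diff [of I "{0..d}"] subset_iff)
  ultimately have "u 0 * c + (\<Sum>k\<in>UNIV. (u \<circ> idx) k * ((p - z)$k + c))
      \<le> (sum u ({0..d} - I) * sum u I + offdiag_sum u I / 2) / sum u {0..d}"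
    using bound by simp
  also have "\<dots> \<le> \<mu>"
    unfolding \<mu>_def d_def [symmetric]
    using complement_sum_offdiag_le [OF antitone less_imp_le [OF u] I] T
    by (intro divide_right_mono) auto
  finally have "1 / \<omega> 0 * c + (\<Sum>k\<in>UNIV. 1 / \<omega> (idx k) * ((p - z)$k + c)) \<le> \<mu>"
    by (simp add: u_def)
  then have "(1 / \<mu>) *\<^sub>R (p - z) \<in> simplexS idx \<omega>"
    using pos \<omega>idx c \<mu> by (intro scaleR_mem_simplexS_le) auto
  moreover have "\<mu> *\<^sub>R ((1 / \<mu>) *\<^sub>R (p - z)) + z = p"
    using \<mu> by simp
  ultimately show ?thesis
    using c(2) by blast
qed

lemma covering_minimum_simplexS_le:
  fixes \<omega> :: "nat \<Rightarrow> real" and idx :: "'n::finite \<Rightarrow> nat"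
  assumes idx: "bij_betw idx UNIV {1..CARD('n)}"
    and pos: "\<And>k. k \<le> CARD('n) \<Longrightarrow> 0 < \<omega> k"
    and mono: "\<And>j k. j \<le> k \<Longrightarrow> k \<le> CARD('n) \<Longrightarrow> \<omega> j \<le> \<omega> k"
    and i: "1 \<le> i" "i \<le> CARD('n)"
  defines "u \<equiv> \<lambda>k. 1 / \<omega> k"
  defines "\<mu> \<equiv> ((u 0 + sum u {i+1..CARD('n)}) * sum u {1..i} + offdiag_sum u {1..i} / 2) / sum u {0..CARD('n)}"
  shows "covering_minimum i (simplexS idx \<omega>) \<le> \<mu>"
proof -
  have "0 < \<mu>"
    unfolding \<mu>_def u_def using pos i
    by (intro divide_pos_pos add_pos_nonneg mult_pos_pos divide_nonneg_pos sum_pos sum_nonneg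
        offdiag_sum_nonneg) (auto simp: less_imp_le)
  show ?thesis
  proof (rule covering_minimum_le)
    fix U :: "(real^'n) set"
    assume "affine U" "aff_dim U = int (CARD('n) - i)"
    from this i(2) obtain J p where J: "card J = i" and "p \<in> U" and p: "\<And>k. k \<notin> J \<Longrightarrow> p$k = 0"
      by (rule affine_meets_coordinate_subspace) blast
    have "\<exists>x\<in>simplexS idx \<omega>. \<exists>z\<in>int_lattice. \<mu> *\<^sub>R x + z = p"
      using supported_point_in_lattice_translate [where \<omega> = \<omega>, OF idx pos mono J p] \<open>0 < \<mu>\<close>
      unfolding \<mu>_def u_def by blast
    then show "\<exists>x\<in>simplexS idx \<omega>. \<exists>z\<in>int_lattice. \<mu> *\<^sub>R x + z \<in> U"
      using \<open>p \<in> U\<close> by blast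
  qed (use \<open>0 < \<mu>\<close> in simp)
qed

theorem proposition5p8:
  fixes \<omega> :: "nat \<Rightarrow> real" and idx :: "'n::finite \<Rightarrow> nat" and i :: nat
  assumes idx: "bij_betw idx UNIV {1..CARD('n)}"
    and pos: "\<forall>k\<le>CARD('n). \<omega> k > 0"
    and mono: "\<forall>k<CARD('n). \<omega> k \<le> \<omega> (Suc k)"
    and i: "1 \<le> i" "i \<le> CARD('n) - 1"
  shows "covering_minimum i (simplexS idx \<omega>) \<le>
    ((1 / \<omega> 0 + (\<Sum>k\<in>{i+1..CARD('n)}. 1 / \<omega> k)) * (\<Sum>j\<in>{1..i}. 1 / \<omega> j)
      + (\<Sum>s\<in>{1..i}. \<Sum>t\<in>{s+1..i}. 1 / (\<omega> s * \<omega> t)))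
    / (\<Sum>k\<in>{0..CARD('n)}. 1 / \<omega> k)"
proof -
  have mono': "\<omega> j \<le> \<omega> k" if "j \<le> k" "k \<le> CARD('n)" for j k
    by (rule lift_Suc_mono_le_ivl [of "{..<CARD('n)}"]) (use mono that in auto)
  have "i \<le> CARD('n)"
    using i(2) by simp
  with idx pos mono' i(1) show ?thesis
    using covering_minimum_simplexS_le [where idx = idx and \<omega> = \<omega> and i = i]
    by (simp add: offdiag_sum_atLeastAtMost)
qed

end
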